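(* Let $k\in\mathbb Z_{\ge1}$ and $a\in\mathbb R_{>0}$. If $a\notin\mathbb J_k:=\{\tfrac{i}{j+1}:i\in\mathbb Z_{\ge1},\ j\in\mathbb Z_{\ge0},\ i+j=k\}=\{\tfrac k1,\tfrac{k-1}{2},\dots,\tfrac1k\}$, then $\Gamma^{a-\delta}_k=\Gamma^{a+\delta}_k$ for all sufficiently small $\delta>0$.
   Context: For $b>0$, $\Gamma^b=(\Gamma^b_0,\Gamma^b_1,\dots)$ is the unit-step lattice path in $\mathbb Z_{\ge0}^2$ which starts at $(0,0)$, lies on or above the line $L_b$ through $(0,-1)$ and $(b,0)$, and steps right (adds $(1,0)$) whenever possible and otherwise steps up (adds $(0,1)$). *)

theory Defs
  imports Complex_Main
begin

text \<open>The point (x,y) lies on or above the line L_b through (0,-1) and (b,0),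
  i.e. the line y = x/b - 1.\<close>
definition above_line :: "real \<Rightarrow> nat \<times> nat \<Rightarrow> bool" where
  "above_line b p \<longleftrightarrow> real (snd p) \<ge> real (fst p) / b - 1"

text \<open>Gamma b n is the n-th point of the lattice path Gamma^b: start at (0,0),
  step right whenever the new point stays on or above L_b, otherwise step up.\<close>
fun Gamma :: "real \<Rightarrow> nat \<Rightarrow> nat \<times> nat" where
  "Gamma b 0 = (0, 0)"
| "Gamma b (Suc n) =
     (let (x, y) = Gamma b n in
      if above_line b (x + 1, y) then (x + 1, y) else (x, y + 1))"

definition J :: "nat \<Rightarrow> real set" where
  "J k = {real i / real (j + 1) | i j. i \<ge> 1 \<and> i + j = k}"

end

theory Submission
  imports Defs "HOL-Analysis.Elementary_Metric_Spaces"
begin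

text \<open>After n steps the path sits on the antidiagonal x + y = n, and the points of that
  antidiagonal lying on or above L_b form an initial segment x = 0, ..., g whose last point
  is Gamma^b_n. For 1 \<le> x \<le> n the point (x, n - x) is on or above L_b exactly when
  x / (n - x + 1) \<le> b, and these thresholds make up J_n. Hence Gamma^b_n only depends on
  which elements of J_n are \<le> b; if a \<notin> J_k, then a - \<delta> and a + \<delta> lie on
  the same side of every element of the finite set J_k once \<delta> is small.\<close>

lemma Gamma_on_antidiagonal: "fst (Gamma b n) + snd (Gamma b n) = n"
  by (induction n) (auto split: prod.splits)

lemma above_line_mono:
  assumes "b > 0" "above_line b (x, y)" "x' \<le> x" "y \<le> y'"
  shows "above_line b (x', y')"
proof -
  have "real x' / b \<le> real x / b"
    using assms by (simp add: divide_right_mono)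
  then show ?thesis
    using assms by (simp add: above_line_def)
qed

lemma above_line_antidiagonal_iff_le_Gamma:
  assumes "b > 0" "x \<le> n"
  shows "above_line b (x, n - x) \<longleftrightarrow> x \<le> fst (Gamma b n)"
  using assms(2)
proof (induction n arbitrary: x)
  case 0
  then show ?case by (simp add: above_line_def)
next
  case (Suc n)
  obtain g h where gh: "Gamma b n = (g, h)" by force
  have h: "h = n - g" "g \<le> n"
    using Gamma_on_antidiagonal[of b n] gh by auto
  have step: "fst (Gamma b (Suc n)) = (if above_line b (g + 1, h) then g + 1 else g)"
    using gh by simp
  consider "x \<le> g" | "x = g + 1" | "x \<ge> g + 2" by linarith
  then show ?case
  proof cases
    case 1
    then have "above_line b (x, n - x)"
      using Suc.IH[of x] h gh by simp
    then show ?thesis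
      using 1 step above_line_mono[OF \<open>b > 0\<close>, of x "n - x" x] by auto
  next
    case 2
    then show ?thesis
      using step h by (simp add: Suc_diff_le)
  next
    case 3
    then have "\<not> above_line b (x - 1, Suc n - x)"
      using Suc.IH[of "x - 1"] Suc.prems gh by (simp add: Suc_diff_le)
    then show ?thesis
      using 3 step above_line_mono[OF \<open>b > 0\<close>, of x "Suc n - x" "x - 1"] by auto
  qed
qed

lemma above_line_antidiagonal_iff_threshold:
  assumes "b > 0" "x \<le> n"
  shows "above_line b (x, n - x) \<longleftrightarrow> real x / real (n - x + 1) \<le> b"
proof -
  have "above_line b (x, n - x) \<longleftrightarrow> real x \<le> b * (real (n - x) + 1)"
    unfolding above_line_def using assms(1) by (simp add: pos_divide_le_eq diff_le_eq mult.commute)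
  also have "\<dots> \<longleftrightarrow> real x / real (n - x + 1) \<le> b"
    by (simp add: pos_divide_le_eq mult.commute add.commute)
  finally show ?thesis .
qed

lemma J_eq_thresholds: "J k = (\<lambda>x. real x / real (k - x + 1)) ` {1..k}"
proof
  show "J k \<subseteq> (\<lambda>x. real x / real (k - x + 1)) ` {1..k}"
    unfolding J_def by (auto intro!: image_eqI simp: add.commute)
  show "(\<lambda>x. real x / real (k - x + 1)) ` {1..k} \<subseteq> J k"
  proof
    fix t assume "t \<in> (\<lambda>x. real x / real (k - x + 1)) ` {1..k}"
    then obtain i where "1 \<le> i" "i \<le> k" "t = real i / real (k - i + 1)" by auto
    then show "t \<in> J k"
      unfolding J_def by (intro CollectI exI[of _ i] exI[of _ "k - i"]) auto
  qed
qed

lemma Gamma_eq_if_same_side_of_J: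
  assumes "b > 0" "b' > 0" "\<And>t. t \<in> J n \<Longrightarrow> t \<le> b \<longleftrightarrow> t \<le> b'"
  shows "Gamma b n = Gamma b' n"
proof -
  have same_side: "above_line b (x, n - x) \<longleftrightarrow> above_line b' (x, n - x)" if "x \<le> n" for x
  proof (cases "x = 0")
    case True
    then show ?thesis by (simp add: above_line_def)
  next
    case False
    then have "real x / real (n - x + 1) \<in> J n"
      using that by (simp add: J_eq_thresholds)
    then show ?thesis
      using assms that by (simp add: above_line_antidiagonal_iff_threshold)
  qed
  have "fst (Gamma b n) \<le> n" "fst (Gamma b' n) \<le> n"
    using Gamma_on_antidiagonal[of b n] Gamma_on_antidiagonal[of b' n] by linarith+
  then have "fst (Gamma b n) = fst (Gamma b' n)"
    using same_side above_line_antidiagonal_iff_le_Gamma[OF assms(1)]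
      above_line_antidiagonal_iff_le_Gamma[OF assms(2)]
    by (meson le_antisym order_refl)
  then show ?thesis
    using Gamma_on_antidiagonal[of b n] Gamma_on_antidiagonal[of b' n] by (simp add: prod_eq_iff)
qed

theorem mainTheorem16:
  fixes k :: nat and a :: real
  assumes "k \<ge> 1" and "a > 0" and "a \<notin> J k"
  shows "\<exists>\<epsilon>>0. \<forall>\<delta>. 0 < \<delta> \<and> \<delta> < \<epsilon> \<longrightarrow> Gamma (a - \<delta>) k = Gamma (a + \<delta>) k"
proof -
  have "finite (J k)"
    by (simp add: J_eq_thresholds)
  then obtain d where "d > 0" and "\<forall>t\<in>J k. t \<noteq> a \<longrightarrow> d \<le> dist a t"
    using finite_set_avoid by blast
  then have d: "d \<le> \<bar>a - t\<bar>" if "t \<in> J k" for t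
    using that assms(3) by (auto simp: dist_real_def)
  have "Gamma (a - \<delta>) k = Gamma (a + \<delta>) k" if "0 < \<delta>" "\<delta> < min a d" for \<delta>
  proof (rule Gamma_eq_if_same_side_of_J)
    fix t assume "t \<in> J k"
    then show "t \<le> a - \<delta> \<longleftrightarrow> t \<le> a + \<delta>"
      using d[of t] that by auto
  qed (use that in auto)
  then show ?thesis
    using assms(2) \<open>d > 0\<close> by (intro exI[of _ "min a d"]) auto
qed

end
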